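(* For $n>3$ let $P_{2n}(x)=x^{2n}+x^{n+3}+x^{n+1}+x^{n-1}+x^{n-3}+1$. Let $\alpha$ be the unique real root of $4x^3-2x=1$, namely $$\alpha=\frac{\sqrt[3]{\frac{\sqrt{57}}{288}+\frac{23}{864}}+\frac16}{\sqrt[3]{\frac{\sqrt{57}}{72}+\frac18}}\approx 0.885.$$ Then $\lim_{n\to\infty}C(P_{2n})=\frac{2}{\pi}\arccos(\alpha)\approx 0.308799876$.
   Context: For a polynomial $P$ of degree $d$, let $I(P)$ and $E(P)$ denote the numbers of complex zeros of $P$ (counted with multiplicity) of modulus $<1$ and $>1$ respectively, and $C(P)=\frac{I(P)+E(P)}{d}$. *)

theory Defs
  imports "HOL-Analysis.Analysis" "HOL-Computational_Algebra.Polynomial"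
begin

definition I_count :: "complex poly \<Rightarrow> nat" where
  "I_count p = (\<Sum>z\<in>{z. poly p z = 0 \<and> norm z < 1}. order z p)"

definition E_count :: "complex poly \<Rightarrow> nat" where
  "E_count p = (\<Sum>z\<in>{z. poly p z = 0 \<and> norm z > 1}. order z p)"

definition C_ratio :: "complex poly \<Rightarrow> real" where
  "C_ratio p = real (I_count p + E_count p) / real (degree p)"

definition P2n :: "nat \<Rightarrow> complex poly" where
  "P2n n = monom 1 (2*n) + monom 1 (n+3) + monom 1 (n+1) + monom 1 (n-1)
           + monom 1 (n-3) + 1"

end

theory Submission
  imports Defs "HOL-Computational_Algebra.Fundamental_Theorem_Algebra"
begin

text \<open>On the unit circle \<open>P\<^sub>2\<^sub>n(e\<^sup>i\<^sup>t) = 2 e\<^sup>i\<^sup>n\<^sup>t F n t\<close> with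
  \<open>F n t = cos (n t) + cos (3 t) + cos t\<close>, so \<open>C(P\<^sub>2\<^sub>n) = 1 - U/(2n)\<close>, where \<open>U\<close> counts the
  unimodular zeros with multiplicity, i.e. the zeros of \<open>F n\<close> in \<open>(-pi, pi]\<close>. Since
  \<open>cos (3 t) + cos t = 4 cos\<^sup>3 t - 2 cos t\<close> and \<open>\<alpha>\<close> is the real root of \<open>4 c\<^sup>3 - 2 c = 1\<close>, the zeros
  in \<open>(0, pi)\<close> lie in the band \<open>[\<beta>, pi - \<beta>]\<close>, \<open>\<beta> = arccos \<alpha>\<close>, and strictly inside the band the
  fast oscillation \<open>cos (n t)\<close> produces a zero in every half period \<open>[k pi/n, (k+1) pi/n]\<close>. By Rolle's
  theorem a half period at distance \<open>\<ge> \<epsilon>\<close> from the edges of the band carries at most one zero, which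
  is simple, and any half period carries at most three, each of multiplicity at most two. Hence
  \<open>U = 2n (pi - 2\<beta>)/pi + O(\<epsilon> n) + O(1)\<close> for every \<open>\<epsilon> > 0\<close>, and \<open>C(P\<^sub>2\<^sub>n) \<rightarrow> 2\<beta>/pi\<close>.\<close>

section \<open>Root multiplicities and the ratio \<open>C\<close>\<close>

lemma funpow_pderiv_0 [simp]: "(pderiv ^^ k) 0 = 0"
  by (induction k) auto

lemma order_le_if_poly_funpow_pderiv_nonzero:
  fixes p :: "'a::{idom,semiring_char_0} poly"
  assumes "poly ((pderiv ^^ k) p) x \<noteq> 0"
  shows "order x p \<le> k"
  using assms
proof (induction k arbitrary: p)
  case 0
  then show ?case by (simp add: order_root)
next
  case (Suc k)
  then have "p \<noteq> 0" by (metis poly_0 funpow_pderiv_0)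
  have "order x (pderiv p) \<le> k"
    using Suc by (simp add: funpow_Suc_right del: funpow.simps)
  then show ?case
    using order_pderiv[OF \<open>p \<noteq> 0\<close>, of x] order_root[of p x] by (cases "poly p x = 0") auto
qed

definition U_count :: "complex poly \<Rightarrow> nat" where
  "U_count p = (\<Sum>z\<in>{z. poly p z = 0 \<and> norm z = 1}. order z p)"

lemma sum_order_roots_complex:
  fixes p :: "complex poly"
  assumes "p \<noteq> 0"
  shows "(\<Sum>z\<in>{z. poly p z = 0}. order z p) = degree p"
proof -
  have "(\<Sum>z\<in>{z. poly p z = 0}. order z p) = sum (count (proots p)) (set_mset (proots p))"
    using assms by simp
  also have "\<dots> = degree p"
    by (simp add: size_proots_complex flip: size_multiset_overloaded_eq)
  finally show ?thesis .
qed

lemma I_count_E_count_U_count_degree: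
  assumes "p \<noteq> 0"
  shows "I_count p + E_count p + U_count p = degree p"
proof -
  define A B C where "A = {z. poly p z = 0 \<and> norm z < 1}" and "B = {z. poly p z = 0 \<and> norm z > 1}"
    and "C = {z. poly p z = 0 \<and> norm z = 1}"
  have fin: "finite A" "finite B" "finite C"
    by (rule finite_subset[OF _ poly_roots_finite[OF assms]]; auto simp: A_def B_def C_def)+
  have split: "{z. poly p z = 0} = A \<union> B \<union> C" and disj: "A \<inter> B = {}" "(A \<union> B) \<inter> C = {}"
    by (auto simp: A_def B_def C_def)
  have "(\<Sum>z\<in>{z. poly p z = 0}. order z p) = (\<Sum>z\<in>A. order z p) + (\<Sum>z\<in>B. order z p) + (\<Sum>z\<in>C. order z p)"
    unfolding split using fin disj by (simp add: sum.union_disjoint)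
  also have "\<dots> = I_count p + E_count p + U_count p"
    unfolding I_count_def E_count_def U_count_def A_def B_def C_def ..
  finally have "(\<Sum>z\<in>{z. poly p z = 0}. order z p) = I_count p + E_count p + U_count p" .
  with sum_order_roots_complex[OF assms] show ?thesis by simp
qed

lemma C_ratio_eq:
  assumes "degree p > 0"
  shows "C_ratio p = 1 - real (U_count p) / real (degree p)"
proof -
  have "p \<noteq> 0"
    using assms by auto
  then have "real (I_count p + E_count p) = real (degree p) - real (U_count p)"
    by (metis I_count_E_count_U_count_degree add_diff_cancel_right' of_nat_add)
  with assms show ?thesis by (simp add: C_ratio_def field_simps)
qed

section \<open>Counting and elementary real analysis\<close>

lemma card_le_mult_card_image:
  assumes "finite A" "\<And>y. card {x\<in>A. f x = y} \<le> m"
  shows "card A \<le> m * card (f ` A)"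
proof -
  have "A = (\<Union>y\<in>f ` A. {x\<in>A. f x = y})"
    by auto
  then have "card A \<le> (\<Sum>y\<in>f ` A. card {x\<in>A. f x = y})"
    using card_UN_le[of "f ` A" "\<lambda>y. {x\<in>A. f x = y}"] assms(1) by simp
  also have "\<dots> \<le> m * card (f ` A)"
    using sum_bounded_above[of "f ` A" "\<lambda>y. card {x\<in>A. f x = y}" m] assms(2) by (simp add: mult.commute)
  finally show ?thesis .
qed

lemma card_le_3_if_no_increasing_4:
  fixes A :: "'a::linorder set"
  assumes "finite A" "\<And>a b c d. a \<in> A \<Longrightarrow> b \<in> A \<Longrightarrow> c \<in> A \<Longrightarrow> d \<in> A \<Longrightarrow> a < b \<Longrightarrow> b < c \<Longrightarrow> c < d \<Longrightarrow> False"
  shows "card A \<le> 3"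
proof (rule ccontr)
  assume "\<not> card A \<le> 3"
  define xs where "xs = sorted_list_of_set A"
  have len: "4 \<le> length xs" and sorted: "sorted_wrt (<) xs" and set: "set xs = A"
    using \<open>\<not> card A \<le> 3\<close> assms(1) by (simp_all add: xs_def)
  have lt: "xs ! i < xs ! j" if "i < j" "j < 4" for i j
    using sorted_wrt_nth_less[OF sorted that(1)] that(2) len by simp
  have mem: "xs ! i \<in> A" if "i < 4" for i
    using nth_mem[of i xs] that len set by simp
  show False
    using assms(2)[OF mem[of 0] mem[of 1] mem[of 2] mem[of 3] lt[of 0 1] lt[of 1 2] lt[of 2 3]] by simp
qed

lemma card_floor_range_le:
  fixes a b :: real
  assumes "a \<le> b"
  shows "real (card {\<lfloor>a\<rfloor>..\<lfloor>b\<rfloor>}) \<le> b - a + 2"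
proof -
  have "\<lfloor>a\<rfloor> \<le> \<lfloor>b\<rfloor>"
    using assms by (rule floor_mono)
  then have "real (card {\<lfloor>a\<rfloor>..\<lfloor>b\<rfloor>}) = of_int \<lfloor>b\<rfloor> - of_int \<lfloor>a\<rfloor> + 1"
    by simp
  then show ?thesis
    using of_int_floor_le[of b] real_of_int_floor_gt_diff_one[of a] by linarith
qed

lemma card_nat_between_ge:
  fixes a b :: real
  assumes "0 \<le> a"
  shows "b - a - 1 \<le> real (card {k::nat. a < real k \<and> real k < b})"
proof -
  define lo hi where "lo = nat \<lfloor>a\<rfloor> + 1" and "hi = nat \<lceil>b\<rceil>"
  have lo: "real lo = of_int \<lfloor>a\<rfloor> + 1"
    using assms by (simp add: lo_def)
  have "{lo..<hi} \<subseteq> {k::nat. a < real k \<and> real k < b}"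
  proof
    fix k assume k: "k \<in> {lo..<hi}"
    then have "real lo \<le> real k" "int k < \<lceil>b\<rceil>"
      by (auto simp: hi_def)
    moreover have "a < real lo"
      using lo real_of_int_floor_add_one_gt[of a] by linarith
    ultimately show "k \<in> {k::nat. a < real k \<and> real k < b}"
      by (simp add: less_ceiling_iff)
  qed
  moreover have "finite {k::nat. a < real k \<and> real k < b}"
    by (rule finite_subset[of _ "{..<hi}"]) (auto simp: hi_def zless_nat_eq_int_zless less_ceiling_iff)
  ultimately have "card {lo..<hi} \<le> card {k::nat. a < real k \<and> real k < b}"
    by (rule card_mono[rotated])
  moreover have "real hi - real lo \<le> real (card {lo..<hi})"
    by (simp add: of_nat_diff_real)
  moreover have "b \<le> real hi"
    using le_of_int_ceiling[of b] by (simp add: hi_def) linarith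
  ultimately show ?thesis
    using lo of_int_floor_le[of a] by linarith
qed

lemma sign_change_imp_zero_between:
  fixes f :: "real \<Rightarrow> real"
  assumes "continuous_on {a..b} f" "a < b" "f a * f b < 0"
  shows "\<exists>x. a < x \<and> x < b \<and> f x = 0"
proof -
  have "f a \<noteq> 0" "f b \<noteq> 0"
    using assms(3) by auto
  have "\<exists>x. a \<le> x \<and> x \<le> b \<and> f x = 0"
  proof (cases "f a < 0")
    case True
    then have "0 < f b"
      using assms(3) by (simp add: mult_less_0_iff)
    then show ?thesis
      using IVT'[of f a 0 b] True assms(1,2) by simp
  next
    case False
    then have "f b < 0"
      using assms(3) by (simp add: mult_less_0_iff)
    then show ?thesis
      using IVT2'[of f b 0 a] False assms(1,2) by simp
  qed
  then show ?thesis
    using \<open>f a \<noteq> 0\<close> \<open>f b \<noteq> 0\<close> by (metis order.order_iff_strict)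
qed

lemma real_derivative_zero_between:
  fixes f f' :: "real \<Rightarrow> real"
  assumes "\<And>x. (f has_real_derivative f' x) (at x)" "a < b" "f a = f b"
  shows "\<exists>x. a < x \<and> x < b \<and> f' x = 0"
proof -
  obtain x where "a < x" "x < b" "f b - f a = (b - a) * f' x"
    using MVT2[OF assms(2)] assms(1) by blast
  then show ?thesis
    using assms(2,3) by auto
qed

lemma floor_div_pi_bounds:
  "of_int \<lfloor>x / pi\<rfloor> * pi \<le> x" "x \<le> (of_int \<lfloor>x / pi\<rfloor> + 1) * pi"
proof -
  have "x / pi * pi = x"
    by simp
  moreover have "of_int \<lfloor>x / pi\<rfloor> * pi \<le> x / pi * pi"
    by (rule mult_right_mono[OF of_int_floor_le]) simp
  moreover have "x / pi * pi \<le> (of_int \<lfloor>x / pi\<rfloor> + 1) * pi"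
    by (rule mult_right_mono[OF less_imp_le[OF real_of_int_floor_add_one_gt]]) simp
  ultimately show "of_int \<lfloor>x / pi\<rfloor> * pi \<le> x" "x \<le> (of_int \<lfloor>x / pi\<rfloor> + 1) * pi"
    by linarith+
qed

lemma card_half_period_indices_le:
  fixes a b :: real
  assumes "a \<le> b"
  shows "real (card {\<lfloor>real n * a / pi\<rfloor>..\<lfloor>real n * b / pi\<rfloor>}) \<le> real n * (b - a) / pi + 2"
proof -
  have "real n * a / pi \<le> real n * b / pi"
    using assms by (intro divide_right_mono mult_left_mono) auto
  then have "real (card {\<lfloor>real n * a / pi\<rfloor>..\<lfloor>real n * b / pi\<rfloor>}) \<le> real n * b / pi - real n * a / pi + 2"
    by (rule card_floor_range_le)
  then show ?thesis
    by (simp add: right_diff_distrib diff_divide_distrib)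
qed

lemma sin_sq_sub_int_pi: "(sin (x - of_int k * pi))\<^sup>2 = (sin x)\<^sup>2"
proof -
  have "sin (of_int k * pi) = 0"
    by (simp add: mult.commute)
  then have "(cos (of_int k * pi))\<^sup>2 = 1"
    using sin_cos_squared_add[of "of_int k * pi"] by simp
  then show ?thesis
    using \<open>sin (of_int k * pi) = 0\<close> by (simp add: sin_diff power_mult_distrib)
qed

lemma cos_sq_sub_int_pi: "(cos (x - of_int k * pi))\<^sup>2 = (cos x)\<^sup>2"
proof -
  have "sin (of_int k * pi) = 0"
    by (simp add: mult.commute)
  then have "(cos (of_int k * pi))\<^sup>2 = 1"
    using sin_cos_squared_add[of "of_int k * pi"] by simp
  then show ?thesis
    using \<open>sin (of_int k * pi) = 0\<close> by (simp add: cos_diff power_mult_distrib)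
qed

lemma sin_sq_ge_min_endpoints:
  assumes "0 \<le> x" "x < y" "y < z" "z \<le> pi"
  shows "min ((sin x)\<^sup>2) ((sin z)\<^sup>2) \<le> (sin y)\<^sup>2"
proof (cases "y \<le> pi/2")
  case True
  then have "sin x \<le> sin y" "0 \<le> sin x"
    using assms by (auto intro: sin_monotone_2pi_le sin_ge_zero)
  then have "(sin x)\<^sup>2 \<le> (sin y)\<^sup>2"
    by (intro power_mono)
  then show ?thesis
    by (simp add: min.coboundedI1)
next
  case False
  have "sin (pi - z) \<le> sin (pi - y)" "0 \<le> sin z"
    by (rule sin_monotone_2pi_le sin_ge_zero; use assms False in linarith)+
  then have "(sin z)\<^sup>2 \<le> (sin y)\<^sup>2"
    using power_mono[of "sin z" "sin y" 2] by simp
  then show ?thesis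
    by (simp add: min.coboundedI2)
qed

lemma cos_sq_le_max_endpoints:
  assumes "0 \<le> x" "x < y" "y < z" "z \<le> pi"
  shows "(cos y)\<^sup>2 \<le> max ((cos x)\<^sup>2) ((cos z)\<^sup>2)"
proof (cases "0 \<le> cos y")
  case True
  moreover have "cos y \<le> cos x"
    using assms by (intro cos_monotone_0_pi_le) auto
  ultimately have "(cos y)\<^sup>2 \<le> (cos x)\<^sup>2"
    by (intro power_mono)
  then show ?thesis
    by (simp add: max.coboundedI1)
next
  case False
  moreover have "cos z \<le> cos y"
    using assms by (intro cos_monotone_0_pi_le) auto
  ultimately have "(- cos y)\<^sup>2 \<le> (- cos z)\<^sup>2"
    by (intro power_mono) auto
  then show ?thesis
    by (simp add: max.coboundedI2)
qed

lemma abs_cos_le_cos: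
  assumes "0 \<le> b" "b \<le> t" "t \<le> pi - b"
  shows "\<bar>cos t\<bar> \<le> cos b"
proof -
  have "cos t \<le> cos b" "cos (pi - t) \<le> cos b"
    using assms by (rule_tac cos_monotone_0_pi_le; linarith)+
  then show ?thesis by (simp add: abs_le_iff)
qed

lemma abs_cos_less_cos:
  assumes "0 \<le> b" "b < t" "t < pi - b"
  shows "\<bar>cos t\<bar> < cos b"
proof -
  have "cos t < cos b" "cos (pi - t) < cos b"
    using assms by (rule_tac cos_monotone_0_pi; linarith)+
  then show ?thesis by (simp add: abs_less_iff)
qed

lemma band_if_abs_cos_le_cos:
  assumes "0 \<le> t" "t \<le> pi" "0 \<le> b" "b \<le> pi" "\<bar>cos t\<bar> \<le> cos b"
  shows "b \<le> t" "t \<le> pi - b"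
proof -
  have "cos t \<le> cos b" "cos (pi - t) \<le> cos b"
    using assms(5) by (simp_all add: abs_le_iff)
  with assms(1-4) have "b \<le> t" "b \<le> pi - t"
    by (subst (asm) cos_mono_le_eq; linarith)+
  then show "b \<le> t" "t \<le> pi - b"
    by simp_all
qed

lemma cos3_add_cos: "cos (3 * t :: real) + cos t = 4 * cos t ^ 3 - 2 * cos t"
  by (simp add: cos_treble_cos)

section \<open>The cubic \<open>4 c\<^sup>3 - 2 c\<close>\<close>

lemma cubic_root_bounds:
  fixes \<alpha> :: real
  assumes "4 * \<alpha>^3 - 2 * \<alpha> = 1"
  shows "17/20 < \<alpha>" "\<alpha> < 1" "0 < 3 * \<alpha>\<^sup>2 - 2"
proof -
  have factor: "4 * \<alpha>^3 - 2 * \<alpha> - 1 = (\<alpha> - c) * ((2 * \<alpha> + c)\<^sup>2 + 3 * c\<^sup>2 - 2) + (4 * c^3 - 2 * c - 1)"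
    for c :: real
    by (simp add: algebra_simps power2_eq_square power3_eq_cube)
  have "0 \<le> (2 * \<alpha> + 17/20)\<^sup>2"
    by simp
  then have "(\<alpha> - 17/20) * ((2 * \<alpha> + 17/20)\<^sup>2 + 3 * (17/20)\<^sup>2 - 2) > 0"
    using assms factor[of "17/20"] by (simp add: power2_eq_square power3_eq_cube)
  moreover have "3 * (17/20)\<^sup>2 - 2 = (67/400::real)"
    by (simp add: power2_eq_square)
  then have "(2 * \<alpha> + 17/20)\<^sup>2 + 3 * (17/20)\<^sup>2 - 2 > (0::real)"
    using \<open>0 \<le> (2 * \<alpha> + 17/20)\<^sup>2\<close> by linarith
  ultimately show "17/20 < \<alpha>"
    by (simp add: zero_less_mult_iff)
  show "\<alpha> < 1"
  proof (rule ccontr)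
    assume "\<not> \<alpha> < 1"
    then have "1 \<le> \<alpha>\<^sup>2"
      by (simp add: one_le_power)
    then have "\<alpha> \<le> \<alpha>^3"
      using mult_left_mono[of 1 "\<alpha>\<^sup>2" \<alpha>] \<open>\<not> \<alpha> < 1\<close> by (simp add: power3_eq_cube power2_eq_square)
    then show False
      using assms \<open>\<not> \<alpha> < 1\<close> by linarith
  qed
  have "(17/20)\<^sup>2 < \<alpha>\<^sup>2"
    using \<open>17/20 < \<alpha>\<close> by (intro power_strict_mono) auto
  then show "0 < 3 * \<alpha>\<^sup>2 - 2"
    by (simp add: power2_eq_square)
qed

lemma cubic_sub_root:
  fixes \<alpha> c :: real
  assumes "4 * \<alpha>^3 - 2 * \<alpha> = 1"
  shows "1 - (4 * c^3 - 2 * c) = (\<alpha> - c) * ((2 * c + \<alpha>)\<^sup>2 + 3 * \<alpha>\<^sup>2 - 2)"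
  using assms by (simp add: algebra_simps power2_eq_square power3_eq_cube)

lemma abs_cubic_gt_1:
  fixes \<alpha> c :: real
  assumes "4 * \<alpha>^3 - 2 * \<alpha> = 1" "\<alpha> < \<bar>c\<bar>"
  shows "1 < \<bar>4 * c^3 - 2 * c\<bar>"
proof -
  have pos: "0 < (2 * x + \<alpha>)\<^sup>2 + 3 * \<alpha>\<^sup>2 - 2" for x
    using cubic_root_bounds(3)[OF assms(1)] zero_le_power2[of "2 * x + \<alpha>"] by linarith
  have gt: "1 < 4 * x^3 - 2 * x" if "\<alpha> < x" for x
    using cubic_sub_root[OF assms(1), of x] mult_neg_pos[of "\<alpha> - x", OF _ pos[of x]] that by linarith
  show ?thesis
  proof (cases "c \<ge> 0")
    case True
    then show ?thesis using gt[of c] assms(2) by simp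
  next
    case False
    then show ?thesis using gt[of "- c"] assms(2) by (simp add: power3_eq_cube)
  qed
qed

lemma abs_cubic_le:
  fixes \<alpha> c c1 :: real
  assumes "4 * \<alpha>^3 - 2 * \<alpha> = 1" "\<bar>c\<bar> \<le> c1" "c1 \<le> \<alpha>"
  shows "\<bar>4 * c^3 - 2 * c\<bar> \<le> 1 - (\<alpha> - c1) * (3 * \<alpha>\<^sup>2 - 2)"
proof -
  have le: "4 * x^3 - 2 * x \<le> 1 - (\<alpha> - c1) * (3 * \<alpha>\<^sup>2 - 2)" if "x \<le> c1" for x
  proof -
    have "(\<alpha> - c1) * (3 * \<alpha>\<^sup>2 - 2) \<le> (\<alpha> - x) * ((2 * x + \<alpha>)\<^sup>2 + 3 * \<alpha>\<^sup>2 - 2)"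
      using that assms(3) cubic_root_bounds(3)[OF assms(1)] by (intro mult_mono) auto
    then show ?thesis
      using cubic_sub_root[OF assms(1), of x] by linarith
  qed
  show ?thesis
    using le[of c] le[of "- c"] assms(2) by (simp add: abs_le_iff power3_eq_cube)
qed

lemma arccos_cubic_root:
  fixes \<alpha> :: real
  assumes "4 * \<alpha>^3 - 2 * \<alpha> = 1"
  shows "0 < arccos \<alpha>" "arccos \<alpha> < pi/2" "cos (arccos \<alpha>) = \<alpha>"
proof -
  have "0 < \<alpha>" "\<alpha> < 1"
    using cubic_root_bounds[OF assms] by auto
  then show "0 < arccos \<alpha>" "arccos \<alpha> < pi/2" "cos (arccos \<alpha>) = \<alpha>"
    using arccos_lt_bounded[of \<alpha>] arccos_less_arccos[of 0 \<alpha>] by auto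
qed

text \<open>A lower bound for \<open>1 - \<bar>cos (3 t) + cos t\<bar>\<close> on \<open>[arccos \<alpha> + \<epsilon>, pi - arccos \<alpha> - \<epsilon>]\<close>,
  see \<open>abs_cubic_le\<close>.\<close>

definition cubic_margin :: "real \<Rightarrow> real \<Rightarrow> real" where
  "cubic_margin \<alpha> \<epsilon> = (\<alpha> - cos (arccos \<alpha> + \<epsilon>)) * (3 * \<alpha>\<^sup>2 - 2)"

lemma cubic_margin_pos:
  fixes \<alpha> \<epsilon> :: real
  assumes "4 * \<alpha>^3 - 2 * \<alpha> = 1" "0 \<le> \<epsilon>" "\<epsilon> \<le> pi/2"
  shows "0 \<le> cubic_margin \<alpha> \<epsilon>" and "0 < \<epsilon> \<Longrightarrow> 0 < cubic_margin \<alpha> \<epsilon>"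
proof -
  note \<beta> = arccos_cubic_root[OF assms(1)]
  have "cos (arccos \<alpha> + \<epsilon>) \<le> \<alpha>"
    using \<beta> assms by (subst \<beta>(3)[symmetric], intro cos_monotone_0_pi_le) auto
  then show "0 \<le> cubic_margin \<alpha> \<epsilon>"
    using cubic_root_bounds(3)[OF assms(1)] by (simp add: cubic_margin_def)
  assume "0 < \<epsilon>"
  then have "cos (arccos \<alpha> + \<epsilon>) < \<alpha>"
    using \<beta> assms by (subst \<beta>(3)[symmetric], intro cos_monotone_0_pi) auto
  then show "0 < cubic_margin \<alpha> \<epsilon>"
    using cubic_root_bounds(3)[OF assms(1)] by (simp add: cubic_margin_def)
qed

section \<open>\<open>P\<^sub>2\<^sub>n\<close> on the unit circle\<close>

definition F :: "nat \<Rightarrow> real \<Rightarrow> real" where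
  "F n t = cos (real n * t) + cos (3 * t) + cos t"

definition F' :: "nat \<Rightarrow> real \<Rightarrow> real" where
  "F' n t = - (real n * sin (real n * t) + 3 * sin (3 * t) + sin t)"

definition F'' :: "nat \<Rightarrow> real \<Rightarrow> real" where
  "F'' n t = - ((real n)\<^sup>2 * cos (real n * t) + 9 * cos (3 * t) + cos t)"

lemma DERIV_F: "(F n has_real_derivative F' n t) (at t)"
  unfolding F_def F'_def by (auto intro!: derivative_eq_intros simp: algebra_simps)

lemma DERIV_F': "(F' n has_real_derivative F'' n t) (at t)"
  unfolding F'_def F''_def by (auto intro!: derivative_eq_intros simp: algebra_simps power2_eq_square)

lemma continuous_on_F: "continuous_on S (F n)"
  unfolding F_def by (intro continuous_intros)

lemma F_minus [simp]: "F n (- t) = F n t"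
  by (simp add: F_def)

lemma F'_minus [simp]: "F' n (- t) = - F' n t"
  by (simp add: F'_def)

lemma degree_P2n:
  assumes "n \<ge> 4"
  shows "degree (P2n n) = 2 * n"
proof -
  let ?Q = "monom (1::complex) (n+3) + monom 1 (n+1) + monom 1 (n-1) + monom 1 (n-3) + 1"
  have "degree ?Q \<le> n + 3"
    by (intro degree_add_le degree_monom_le[THEN order.trans]) (use assms in auto)
  then have "degree ?Q < degree (monom (1::complex) (2*n))"
    using assms by (simp add: degree_monom_eq)
  moreover have "P2n n = monom 1 (2*n) + ?Q"
    by (simp add: P2n_def add.assoc)
  ultimately show ?thesis
    by (simp add: degree_add_eq_left degree_monom_eq)
qed

lemma cis_power_shift: "cis t ^ k = cis (real n * t) * cis ((real k - real n) * t)"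
proof -
  have "real n * t + (real k - real n) * t = real k * t"
    by (simp add: algebra_simps)
  then show ?thesis
    by (simp add: Complex.DeMoivre cis_mult)
qed

lemma cis_add_cis_minus: "cis x + cis (- x) = 2 * complex_of_real (cos x)"
  by (simp add: complex_eq_iff)

lemma poly_P2n_cis:
  assumes "n \<ge> 4"
  shows "poly (P2n n) (cis t) = 2 * cis (real n * t) * F n t"
proof -
  have "real (n-1) = real n - 1" "real (n-3) = real n - 3"
    using assms by auto
  then have "poly (P2n n) (cis t) = cis (real n * t) * ((cis (real n * t) + cis (- (real n * t)))
      + (cis (3 * t) + cis (- (3 * t))) + (cis t + cis (- t)))"
    by (simp add: P2n_def poly_monom cis_power_shift[of t _ n] cis_mult algebra_simps)
  then show ?thesis
    by (simp add: cis_add_cis_minus F_def algebra_simps)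
qed

lemma poly_pderiv_monom_mult:
  "z * poly (pderiv (monom (1::'a::idom) k)) z = of_nat k * z ^ k"
  by (cases k) (auto simp: pderiv_monom poly_monom)

lemma poly_pderiv2_monom_mult:
  "z\<^sup>2 * poly (pderiv (pderiv (monom (1::'a::idom) k))) z = of_nat k * (of_nat k - 1) * z ^ k"
proof (cases "k \<ge> 2")
  case True
  then obtain m where "k = Suc (Suc m)"
    by (metis add_2_eq_Suc le_iff_add)
  then show ?thesis
    by (simp add: pderiv_monom poly_monom power2_eq_square algebra_simps)
next
  case False
  then have "k = 0 \<or> k = 1" by auto
  then show ?thesis by (auto simp: pderiv_monom)
qed

lemma pderiv_P2n: "pderiv (P2n n) = pderiv (monom 1 (2*n)) + pderiv (monom 1 (n+3))
    + pderiv (monom 1 (n+1)) + pderiv (monom 1 (n-1)) + pderiv (monom 1 (n-3))"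
  by (simp add: P2n_def pderiv_add)

lemma poly_pderiv_P2n_cis:
  assumes "n \<ge> 4"
  shows "cis t * poly (pderiv (P2n n)) (cis t)
    = 2 * cis (real n * t) * (real n * F n t - \<i> * F' n t)"
proof -
  have shift: "real (2*n) - real n = real n" "real (n+3) - real n = 3" "real (n+1) - real n = 1"
    "real (n-1) - real n = -1" "real (n-3) - real n = -3"
    and of_nat_diff: "of_nat (n-1) = (of_nat n - 1 :: complex)" "of_nat (n-3) = (of_nat n - 3 :: complex)"
    using assms by (auto simp: of_nat_diff)
  have "cis t * poly (pderiv (P2n n)) (cis t) = of_nat (2*n) * cis t ^ (2*n)
      + of_nat (n+3) * cis t ^ (n+3) + of_nat (n+1) * cis t ^ (n+1)
      + of_nat (n-1) * cis t ^ (n-1) + of_nat (n-3) * cis t ^ (n-3)"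
    unfolding pderiv_P2n poly_add distrib_left poly_pderiv_monom_mult ..
  also have "\<dots> = cis (real n * t) * (2 * of_nat n * cis (real n * t) + (of_nat n + 3) * cis (3*t)
      + (of_nat n + 1) * cis t + (of_nat n - 1) * cis (-t) + (of_nat n - 3) * cis (-(3*t)))"
    by (simp only: cis_power_shift[of t _ n] shift of_nat_diff) (simp add: algebra_simps)
  also have "\<dots> = 2 * cis (real n * t) * (real n * F n t - \<i> * F' n t)"
    by (simp add: complex_eq_iff F_def F'_def algebra_simps)
  finally show ?thesis .
qed

lemma poly_pderiv2_P2n_cis:
  assumes "n \<ge> 4"
  shows "cis t ^ 2 * poly (pderiv (pderiv (P2n n))) (cis t)
    = 2 * cis (real n * t) * (real n * (real n - 1) * F n t - \<i> * (2 * real n - 1) * F' n t - F'' n t)"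
proof -
  have shift: "real (2*n) - real n = real n" "real (n+3) - real n = 3" "real (n+1) - real n = 1"
    "real (n-1) - real n = -1" "real (n-3) - real n = -3"
    and of_nat_diff: "of_nat (n-1) = (of_nat n - 1 :: complex)" "of_nat (n-3) = (of_nat n - 3 :: complex)"
    using assms by (auto simp: of_nat_diff)
  have "cis t ^ 2 * poly (pderiv (pderiv (P2n n))) (cis t)
      = of_nat (2*n) * (of_nat (2*n) - 1) * cis t ^ (2*n)
      + of_nat (n+3) * (of_nat (n+3) - 1) * cis t ^ (n+3)
      + of_nat (n+1) * (of_nat (n+1) - 1) * cis t ^ (n+1)
      + of_nat (n-1) * (of_nat (n-1) - 1) * cis t ^ (n-1)
      + of_nat (n-3) * (of_nat (n-3) - 1) * cis t ^ (n-3)"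
    unfolding pderiv_P2n pderiv_add poly_add distrib_left poly_pderiv2_monom_mult ..
  also have "\<dots> = cis (real n * t) * (2 * of_nat n * (2 * of_nat n - 1) * cis (real n * t)
      + (of_nat n + 3) * (of_nat n + 2) * cis (3*t) + (of_nat n + 1) * of_nat n * cis t
      + (of_nat n - 1) * (of_nat n - 2) * cis (-t) + (of_nat n - 3) * (of_nat n - 4) * cis (-(3*t)))"
    by (simp only: cis_power_shift[of t _ n] shift of_nat_diff) (simp add: algebra_simps)
  also have "\<dots> = 2 * cis (real n * t)
      * (real n * (real n - 1) * F n t - \<i> * (2 * real n - 1) * F' n t - F'' n t)"
    by (simp add: complex_eq_iff F_def F'_def F''_def algebra_simps power2_eq_square)
  finally show ?thesis .
qed

lemma sin_bound_at_F'_zero: "F' n t = 0 \<Longrightarrow> (real n * sin (real n * t))\<^sup>2 \<le> 16"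
proof -
  assume "F' n t = 0"
  then have "real n * sin (real n * t) = - (3 * sin (3 * t) + sin t)"
    by (simp add: F'_def algebra_simps)
  moreover have "\<bar>3 * sin (3 * t) + sin t\<bar> \<le> 4"
    using abs_sin_le_one[of "3 * t"] abs_sin_le_one[of t] by linarith
  ultimately have "\<bar>real n * sin (real n * t)\<bar> \<le> 4"
    by simp
  then show ?thesis
    using abs_le_square_iff[of "real n * sin (real n * t)" 4] by simp
qed

lemma cos_bound_at_F''_zero: "F'' n t = 0 \<Longrightarrow> ((real n)\<^sup>2 * cos (real n * t))\<^sup>2 \<le> 100"
proof -
  assume "F'' n t = 0"
  then have "(real n)\<^sup>2 * cos (real n * t) = - (9 * cos (3 * t) + cos t)"
    by (simp add: F''_def algebra_simps)
  moreover have "\<bar>9 * cos (3 * t) + cos t\<bar> \<le> 10"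
    using abs_cos_le_one[of "3 * t"] abs_cos_le_one[of t] by linarith
  ultimately have "\<bar>(real n)\<^sup>2 * cos (real n * t)\<bar> \<le> 10"
    by simp
  then show ?thesis
    using abs_le_square_iff[of "(real n)\<^sup>2 * cos (real n * t)" 10] by simp
qed

lemma F'_F''_not_both_zero:
  assumes "n \<ge> 6" "F' n t = 0"
  shows "F'' n t \<noteq> 0"
proof
  assume "F'' n t = 0"
  define s c where "s = sin (real n * t)" and "c = cos (real n * t)"
  have s: "(real n)\<^sup>2 * s\<^sup>2 \<le> 16" and c: "(real n)\<^sup>2 * ((real n)\<^sup>2 * c\<^sup>2) \<le> 100"
    using sin_bound_at_F'_zero[OF assms(2)] cos_bound_at_F''_zero[OF \<open>F'' n t = 0\<close>]
    by (simp_all add: s_def c_def power_mult_distrib)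
  have n: "36 \<le> (real n)\<^sup>2"
    using power_mono[of 6 "real n" 2] assms(1) by simp
  have "36 * s\<^sup>2 \<le> 16"
    using mult_right_mono[OF n, of "s\<^sup>2"] s by simp
  moreover have "36 * c\<^sup>2 \<le> (real n)\<^sup>2 * c\<^sup>2"
    using mult_right_mono[OF n, of "c\<^sup>2"] by simp
  then have "36 * (36 * c\<^sup>2) \<le> 100"
    using mult_mono[OF n, of "36 * c\<^sup>2" "(real n)\<^sup>2 * c\<^sup>2"] c by simp
  moreover have "s\<^sup>2 + c\<^sup>2 = 1"
    by (simp add: s_def c_def)
  ultimately show False by linarith
qed

lemma order_P2n_cis:
  assumes "n \<ge> 6" "F n t = 0"
  shows "1 \<le> order (cis t) (P2n n)" and "order (cis t) (P2n n) \<le> 2"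
    and "F' n t \<noteq> 0 \<Longrightarrow> order (cis t) (P2n n) \<le> 1"
proof -
  have "n \<ge> 4" using assms by simp
  then have "P2n n \<noteq> 0" "poly (P2n n) (cis t) = 0"
    using degree_P2n[of n] poly_P2n_cis[of n t] assms by auto
  then show "1 \<le> order (cis t) (P2n n)"
    by (simp add: order_root Suc_le_eq)
  show simple: "order (cis t) (P2n n) \<le> 1" if "F' n t \<noteq> 0"
  proof (rule order_le_if_poly_funpow_pderiv_nonzero)
    show "poly ((pderiv ^^ 1) (P2n n)) (cis t) \<noteq> 0"
      using poly_pderiv_P2n_cis[OF \<open>n \<ge> 4\<close>, of t] assms(2) that by auto
  qed
  show "order (cis t) (P2n n) \<le> 2"
  proof (cases "F' n t = 0")
    case True
    show ?thesis
    proof (rule order_le_if_poly_funpow_pderiv_nonzero)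
      show "poly ((pderiv ^^ 2) (P2n n)) (cis t) \<noteq> 0"
        using poly_pderiv2_P2n_cis[OF \<open>n \<ge> 4\<close>, of t] F'_F''_not_both_zero[OF assms(1) True]
          assms(2) True by (auto simp: numeral_2_eq_2)
    qed
  qed (use simple in auto)
qed

definition F_zeros :: "nat \<Rightarrow> real set" where
  "F_zeros n = {t. 0 < t \<and> t < pi \<and> F n t = 0}"

lemma F_0_nonzero: "F n 0 \<noteq> 0"
  by (simp add: F_def)

lemma F_pi_nonzero: "F n pi \<noteq> 0"
proof -
  have "F n pi = (-1) ^ n - 2"
    using cos_npi[of 3] by (simp add: F_def)
  moreover have "(-1::real) ^ n \<le> 1"
    by (cases "even n") auto
  ultimately show ?thesis by linarith
qed

lemma unit_circle_roots_P2n: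
  assumes "n \<ge> 4"
  shows "{z. poly (P2n n) z = 0 \<and> norm z = 1} = cis ` (F_zeros n \<union> uminus ` F_zeros n)"
proof (intro equalityI subsetI)
  fix z assume z: "z \<in> {z. poly (P2n n) z = 0 \<and> norm z = 1}"
  define a where "a = Arg z"
  have "z = cis a"
    using z complex_norm_eq_1_exp_eq[of z] by (simp add: a_def cis_conv_exp)
  moreover have "-pi < a" "a \<le> pi"
    using mpi_less_Arg Arg_le_pi a_def by auto
  moreover have "F n a = 0"
    using z \<open>z = cis a\<close> poly_P2n_cis[OF assms] by auto
  then have "a \<noteq> 0" "a \<noteq> pi"
    using F_0_nonzero F_pi_nonzero by auto
  ultimately have "a \<in> F_zeros n \<or> - a \<in> F_zeros n" "z = cis a"
    using \<open>F n a = 0\<close> by (auto simp: F_zeros_def)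
  then show "z \<in> cis ` (F_zeros n \<union> uminus ` F_zeros n)"
    by (metis UnI1 UnI2 image_eqI minus_minus)
next
  fix z assume "z \<in> cis ` (F_zeros n \<union> uminus ` F_zeros n)"
  then obtain t where "z = cis t" "F n t = 0"
    by (auto simp: F_zeros_def)
  then show "z \<in> {z. poly (P2n n) z = 0 \<and> norm z = 1}"
    using poly_P2n_cis[OF assms] by auto
qed

lemma inj_on_cis_F_zeros: "inj_on cis (F_zeros n \<union> uminus ` F_zeros n)"
proof (rule inj_onI)
  have Arg_cis: "Arg (cis t) = t" if "t \<in> F_zeros n \<union> uminus ` F_zeros n" for t
    using that by (intro Arg_unique[of 1]) (auto simp: cis_conv_exp F_zeros_def)
  fix x y assume "x \<in> F_zeros n \<union> uminus ` F_zeros n" "y \<in> F_zeros n \<union> uminus ` F_zeros n"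
    "cis x = cis y"
  then show "x = y"
    using Arg_cis by metis
qed

lemma finite_F_zeros:
  assumes "n \<ge> 4"
  shows "finite (F_zeros n)"
proof -
  have "P2n n \<noteq> 0"
    using degree_P2n[OF assms] assms by auto
  have "finite {z. poly (P2n n) z = 0 \<and> norm z = 1}"
    by (rule finite_subset[OF _ poly_roots_finite[OF \<open>P2n n \<noteq> 0\<close>]]) auto
  then have "finite (F_zeros n \<union> uminus ` F_zeros n)"
    unfolding unit_circle_roots_P2n[OF assms] using finite_imageD inj_on_cis_F_zeros by blast
  then show ?thesis by simp
qed

lemma U_count_P2n:
  assumes "n \<ge> 4"
  shows "U_count (P2n n) = (\<Sum>t\<in>F_zeros n. order (cis t) (P2n n) + order (cis (- t)) (P2n n))"
proof -
  have "F_zeros n \<inter> uminus ` F_zeros n = {}"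
    by (auto simp: F_zeros_def)
  then have "U_count (P2n n) = (\<Sum>t\<in>F_zeros n. order (cis t) (P2n n))
      + (\<Sum>t\<in>uminus ` F_zeros n. order (cis t) (P2n n))"
    unfolding U_count_def unit_circle_roots_P2n[OF assms] sum.reindex[OF inj_on_cis_F_zeros]
    using finite_F_zeros[OF assms] by (simp add: sum.union_disjoint)
  also have "(\<Sum>t\<in>uminus ` F_zeros n. order (cis t) (P2n n)) = (\<Sum>t\<in>F_zeros n. order (cis (- t)) (P2n n))"
    by (simp add: sum.reindex inj_on_def)
  finally show ?thesis
    by (simp add: sum.distrib)
qed

lemma U_count_P2n_bounds:
  assumes "n \<ge> 6"
  shows "2 * card (F_zeros n) \<le> U_count (P2n n)"
    and "U_count (P2n n) \<le> (\<Sum>t\<in>F_zeros n. if F' n t = 0 then 4 else 2)"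
proof -
  have n4: "n \<ge> 4"
    using assms by simp
  have zero: "F n t = 0" "F n (- t) = 0" if "t \<in> F_zeros n" for t
    using that by (auto simp: F_zeros_def)
  have "2 * card (F_zeros n) = (\<Sum>t\<in>F_zeros n. 2)"
    by simp
  also have "\<dots> \<le> U_count (P2n n)"
    unfolding U_count_P2n[OF n4]
    using order_P2n_cis(1)[OF assms zero(1)] order_P2n_cis(1)[OF assms zero(2)]
    by (intro sum_mono) (metis add_mono one_add_one)
  finally show "2 * card (F_zeros n) \<le> U_count (P2n n)" .
  show "U_count (P2n n) \<le> (\<Sum>t\<in>F_zeros n. if F' n t = 0 then 4 else 2)"
    unfolding U_count_P2n[OF n4]
    using order_P2n_cis(2,3)[OF assms zero(1)] order_P2n_cis(2,3)[OF assms zero(2)]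
    by (intro sum_mono) (fastforce simp: add_mono)
qed

section \<open>Zeros of \<open>F n\<close> in half periods\<close>

lemma F_zeros_band:
  fixes \<alpha> :: real
  assumes "4 * \<alpha>^3 - 2 * \<alpha> = 1" "t \<in> F_zeros n"
  shows "arccos \<alpha> \<le> t" "t \<le> pi - arccos \<alpha>"
proof -
  note \<beta> = arccos_cubic_root[OF assms(1)]
  have "cos (3 * t) + cos t = - cos (real n * t)" "0 < t" "t < pi"
    using assms(2) by (auto simp: F_zeros_def F_def)
  then have "\<bar>4 * cos t ^ 3 - 2 * cos t\<bar> \<le> 1"
    by (simp add: cos3_add_cos)
  then have "\<not> \<alpha> < \<bar>cos t\<bar>"
    using abs_cubic_gt_1[OF assms(1), of "cos t"] by linarith
  then have "\<bar>cos t\<bar> \<le> cos (arccos \<alpha>)"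
    using \<beta>(3) by simp
  then show "arccos \<alpha> \<le> t" "t \<le> pi - arccos \<alpha>"
    using band_if_abs_cos_le_cos[of t "arccos \<alpha>"] \<beta> \<open>0 < t\<close> \<open>t < pi\<close> by auto
qed

lemma abs_cos3_add_cos_less_1:
  fixes \<alpha> :: real
  assumes "4 * \<alpha>^3 - 2 * \<alpha> = 1" "arccos \<alpha> < t" "t < pi - arccos \<alpha>"
  shows "\<bar>cos (3 * t) + cos t\<bar> < 1"
proof -
  note \<beta> = arccos_cubic_root[OF assms(1)]
  have "\<bar>cos t\<bar> < \<alpha>"
    using abs_cos_less_cos[of "arccos \<alpha>" t] \<beta> assms by auto
  then have "\<bar>4 * cos t ^ 3 - 2 * cos t\<bar> \<le> 1 - (\<alpha> - \<bar>cos t\<bar>) * (3 * \<alpha>\<^sup>2 - 2)"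
    using abs_cubic_le[OF assms(1), of "cos t" "\<bar>cos t\<bar>"] by simp
  moreover have "0 < (\<alpha> - \<bar>cos t\<bar>) * (3 * \<alpha>\<^sup>2 - 2)"
    using \<open>\<bar>cos t\<bar> < \<alpha>\<close> cubic_root_bounds(3)[OF assms(1)] by simp
  ultimately show ?thesis
    by (simp add: cos3_add_cos)
qed

lemma sin_sq_ge_margin_at_F_zero:
  fixes \<alpha> \<epsilon> :: real
  assumes "4 * \<alpha>^3 - 2 * \<alpha> = 1" "0 \<le> \<epsilon>" "F n t = 0"
    and "arccos \<alpha> + \<epsilon> \<le> t" "t \<le> pi - arccos \<alpha> - \<epsilon>"
  shows "cubic_margin \<alpha> \<epsilon> \<le> (sin (real n * t))\<^sup>2"
proof -
  note \<beta> = arccos_cubic_root[OF assms(1)]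
  define m where "m = cubic_margin \<alpha> \<epsilon>"
  have "\<epsilon> \<le> pi/2"
    using assms(4,5) \<beta>(1) by linarith
  have "\<bar>cos t\<bar> \<le> cos (arccos \<alpha> + \<epsilon>)"
    using abs_cos_le_cos[of "arccos \<alpha> + \<epsilon>" t] \<beta> assms by simp
  moreover have "cos (arccos \<alpha> + \<epsilon>) \<le> \<alpha>"
    using cubic_margin_pos(1)[OF assms(1,2) \<open>\<epsilon> \<le> pi/2\<close>] cubic_root_bounds(3)[OF assms(1)]
    by (simp add: cubic_margin_def zero_le_mult_iff)
  ultimately have "\<bar>cos (3 * t) + cos t\<bar> \<le> 1 - m"
    using abs_cubic_le[OF assms(1)] by (simp add: cos3_add_cos m_def cubic_margin_def)
  moreover have "cos (real n * t) = - (cos (3 * t) + cos t)"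
    using assms(3) by (simp add: F_def)
  ultimately have "\<bar>cos (real n * t)\<bar> \<le> 1 - m"
    by simp
  moreover have "0 \<le> m"
    using cubic_margin_pos(1)[OF assms(1,2) \<open>\<epsilon> \<le> pi/2\<close>] by (simp add: m_def)
  ultimately have "(cos (real n * t))\<^sup>2 \<le> (1 - m)\<^sup>2" "(1 - m)\<^sup>2 \<le> 1 - m"
    using abs_le_square_iff[of "cos (real n * t)" "1 - m"] mult_right_mono[of "1 - m" 1 "1 - m"]
    by (auto simp: power2_eq_square)
  then have "(cos (real n * t))\<^sup>2 \<le> 1 - m"
    by linarith
  then show ?thesis
    by (simp add: sin_squared_eq m_def)
qed

text \<open>Between two zeros of \<open>F n\<close> lies a zero of \<open>F' n\<close>, where \<open>\<bar>sin (n t)\<bar> \<le> 4 / n\<close>; by concavity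
  of \<open>sin\<close> on a half period this is impossible if \<open>sin\<^sup>2 (n t) \<ge> \<delta>\<close> at both zeros.\<close>

lemma at_most_one_F_zero_in_half_period:
  assumes "16 < (real n)\<^sup>2 * \<delta>" and "t1 < t2"
    and "of_int k * pi \<le> real n * t1" "real n * t2 \<le> (of_int k + 1) * pi"
    and "F n t1 = 0" "F n t2 = 0"
    and "\<delta> \<le> (sin (real n * t1))\<^sup>2" "\<delta> \<le> (sin (real n * t2))\<^sup>2"
  shows False
proof -
  obtain x where x: "t1 < x" "x < t2" "F' n x = 0"
    using real_derivative_zero_between[OF DERIV_F assms(2)] assms(5,6) by metis
  have "0 < real n"
    using assms(1) by (cases n) auto
  define \<phi> where "\<phi> y = real n * y - of_int k * pi" for y
  have "0 \<le> \<phi> t1" "\<phi> t1 < \<phi> x" "\<phi> x < \<phi> t2" "\<phi> t2 \<le> pi"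
    using assms(3,4) x \<open>0 < real n\<close> by (auto simp: \<phi>_def algebra_simps)
  then have "min ((sin (\<phi> t1))\<^sup>2) ((sin (\<phi> t2))\<^sup>2) \<le> (sin (\<phi> x))\<^sup>2"
    by (rule sin_sq_ge_min_endpoints)
  then have "\<delta> \<le> (sin (real n * x))\<^sup>2"
    using assms(7,8) by (simp add: \<phi>_def sin_sq_sub_int_pi)
  then have "(real n)\<^sup>2 * \<delta> \<le> (real n * sin (real n * x))\<^sup>2"
    by (simp add: power_mult_distrib mult_left_mono)
  then show False
    using sin_bound_at_F'_zero[OF x(3)] assms(1) by linarith
qed

text \<open>Four zeros of \<open>F n\<close> in a half period would give three zeros of \<open>F' n\<close>, at which
  \<open>cos\<^sup>2 (n t) \<ge> 1 - 16/n\<^sup>2\<close>. Of the zeros of \<open>F'' n\<close> on either side of the middle one, one has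
  \<open>cos\<^sup>2 (n t)\<close> at least as large; but there \<open>n\<^sup>4 cos\<^sup>2 (n t) \<le> 100\<close>.\<close>

lemma at_most_three_F_zeros_in_half_period:
  assumes "n \<ge> 6" and "t1 < t2" "t2 < t3" "t3 < t4"
    and "of_int k * pi \<le> real n * t1" "real n * t4 \<le> (of_int k + 1) * pi"
    and "F n t1 = 0" "F n t2 = 0" "F n t3 = 0" "F n t4 = 0"
  shows False
proof -
  obtain x1 x2 x3 where x: "t1 < x1" "x1 < t2" "t2 < x2" "x2 < t3" "t3 < x3" "x3 < t4"
    and F': "F' n x1 = 0" "F' n x2 = 0" "F' n x3 = 0"
    using real_derivative_zero_between[OF DERIV_F] assms(2-4,7-10) by metis
  have n: "6 \<le> real n"
    using assms(1) by simp
  define \<phi> where "\<phi> y = real n * y - of_int k * pi" for y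
  have \<phi>_mono: "\<phi> a < \<phi> b" if "a < b" for a b
    using that n by (simp add: \<phi>_def)
  have \<phi>_range: "0 \<le> \<phi> y \<and> \<phi> y \<le> pi" if "t1 \<le> y" "y \<le> t4" for y
    using that assms(5,6) mult_left_mono[OF that(1), of "real n"] mult_left_mono[OF that(2), of "real n"]
    by (auto simp: \<phi>_def algebra_simps)
  have "x1 < x2" "x2 < x3" "F' n x1 = F' n x2" "F' n x2 = F' n x3"
    using x F' by simp_all
  then obtain z1 z3 where z: "x1 < z1" "z1 < x2" "x2 < z3" "z3 < x3" and F'': "F'' n z1 = 0" "F'' n z3 = 0"
    using real_derivative_zero_between[OF DERIV_F'] by meson
  have "0 \<le> \<phi> z1" "\<phi> z1 < \<phi> x2" "\<phi> x2 < \<phi> z3" "\<phi> z3 \<le> pi"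
    using \<phi>_range[of z1] \<phi>_range[of z3] \<phi>_mono[of z1 x2] \<phi>_mono[of x2 z3] x z by auto
  then have "(cos (\<phi> x2))\<^sup>2 \<le> max ((cos (\<phi> z1))\<^sup>2) ((cos (\<phi> z3))\<^sup>2)"
    by (rule cos_sq_le_max_endpoints)
  then obtain z where "F'' n z = 0" "(cos (\<phi> x2))\<^sup>2 \<le> (cos (\<phi> z))\<^sup>2"
    using F'' by (cases "(cos (\<phi> z1))\<^sup>2 \<le> (cos (\<phi> z3))\<^sup>2") (auto simp: max_def)
  have "(cos (\<phi> x2))\<^sup>2 = 1 - (sin (real n * x2))\<^sup>2"
    unfolding \<phi>_def cos_sq_sub_int_pi by (simp add: cos_squared_eq)
  then have "(real n)\<^sup>2 * (cos (\<phi> x2))\<^sup>2 = (real n)\<^sup>2 - (real n * sin (real n * x2))\<^sup>2"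
    by (simp add: power_mult_distrib right_diff_distrib)
  then have "(real n)\<^sup>2 - 16 \<le> (real n)\<^sup>2 * (cos (\<phi> x2))\<^sup>2"
    using sin_bound_at_F'_zero[OF F'(2)] by linarith
  moreover have "(real n)\<^sup>2 * (cos (\<phi> x2))\<^sup>2 \<le> (real n)\<^sup>2 * (cos (\<phi> z))\<^sup>2"
    using \<open>(cos (\<phi> x2))\<^sup>2 \<le> (cos (\<phi> z))\<^sup>2\<close> by (simp add: mult_left_mono)
  moreover have "36 \<le> (real n)\<^sup>2"
    using power_mono[OF n, of 2] by simp
  ultimately have "36 * 20 \<le> (real n)\<^sup>2 * ((real n)\<^sup>2 * (cos (\<phi> z))\<^sup>2)"
    by (intro mult_mono) auto
  moreover have "(real n)\<^sup>2 * ((real n)\<^sup>2 * (cos (\<phi> z))\<^sup>2) \<le> 100"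
    using cos_bound_at_F''_zero[OF \<open>F'' n z = 0\<close>] by (simp add: \<phi>_def cos_sq_sub_int_pi power_mult_distrib)
  ultimately show False
    by simp
qed

text \<open>Inside the band \<open>F n (k pi / n) = (-1)\<^sup>k + (cos (3 t) + cos t)\<close> alternates in sign, as the
  second summand has modulus \<open>< 1\<close>.\<close>

lemma F_zero_in_half_period:
  fixes \<alpha> :: real
  assumes "4 * \<alpha>^3 - 2 * \<alpha> = 1" "0 < n"
    and "arccos \<alpha> < real k * pi / real n" "real (Suc k) * pi / real n < pi - arccos \<alpha>"
  shows "\<exists>t. real k * pi / real n < t \<and> t < real (Suc k) * pi / real n \<and> F n t = 0"
proof (rule sign_change_imp_zero_between[OF continuous_on_F])
  define \<tau> where "\<tau> j = real j * pi / real n" for j :: nat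
  show "\<tau> k < \<tau> (Suc k)"
    using assms(2) by (simp add: \<tau>_def divide_strict_right_mono)
  moreover have "arccos \<alpha> < \<tau> k" "\<tau> (Suc k) < pi - arccos \<alpha>"
    using assms(3,4) by (simp_all add: \<tau>_def)
  ultimately have "arccos \<alpha> < \<tau> j \<and> \<tau> j < pi - arccos \<alpha>" if "j \<in> {k, Suc k}" for j
    using that by auto
  then have bound: "\<bar>cos (3 * \<tau> j) + cos (\<tau> j)\<bar> < 1" if "j \<in> {k, Suc k}" for j
    using abs_cos3_add_cos_less_1[OF assms(1)] that by blast
  have F_\<tau>: "F n (\<tau> j) = (-1) ^ j + (cos (3 * \<tau> j) + cos (\<tau> j))" for j
    using assms(2) by (simp add: F_def \<tau>_def)
  show "F n (\<tau> k) * F n (\<tau> (Suc k)) < 0"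
  proof (cases "even k")
    case True
    then show ?thesis
      using F_\<tau>[of k] F_\<tau>[of "Suc k"] bound[of k] bound[of "Suc k"]
        mult_pos_neg[of "F n (\<tau> k)" "F n (\<tau> (Suc k))"] by (simp add: abs_less_iff)
  next
    case False
    then show ?thesis
      using F_\<tau>[of k] F_\<tau>[of "Suc k"] bound[of k] bound[of "Suc k"]
        mult_neg_pos[of "F n (\<tau> k)" "F n (\<tau> (Suc k))"] by (simp add: abs_less_iff)
  qed
qed

lemma card_F_zeros_ge:
  fixes \<alpha> :: real
  assumes "4 * \<alpha>^3 - 2 * \<alpha> = 1" "n \<ge> 4"
  shows "real n * (pi - 2 * arccos \<alpha>) / pi - 2 \<le> real (card (F_zeros n))"
proof -
  define \<beta> where "\<beta> = arccos \<alpha>"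
  have \<beta>: "0 < \<beta>" "\<beta> < pi/2"
    using arccos_cubic_root[OF assms(1)] by (simp_all add: \<beta>_def)
  have n: "0 < real n"
    using assms(2) by simp
  define \<tau> where "\<tau> k = real k * pi / real n" for k :: nat
  define K where "K = {k::nat. real n * \<beta> / pi < real k \<and> real k < real n * (pi - \<beta>) / pi - 1}"
  have \<tau>_K: "\<beta> < \<tau> k" "\<tau> (Suc k) < pi - \<beta>" if "k \<in> K" for k
    using that n by (auto simp: K_def \<tau>_def field_simps)
  obtain r where r: "\<tau> k < r k" "r k < \<tau> (Suc k)" "F n (r k) = 0" if "k \<in> K" for k
    using F_zero_in_half_period[OF assms(1)] \<tau>_K n unfolding \<tau>_def \<beta>_def by (metis of_nat_0_less_iff)
  have "r ` K \<subseteq> F_zeros n"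
  proof
    fix t assume "t \<in> r ` K"
    then obtain k where "k \<in> K" "t = r k" by blast
    moreover have "0 \<le> \<tau> k"
      using n by (simp add: \<tau>_def)
    ultimately show "t \<in> F_zeros n"
      using r[of k] \<tau>_K[of k] \<beta> by (auto simp: F_zeros_def)
  qed
  moreover have "inj_on r K"
  proof (rule linorder_inj_onI')
    fix i j assume "i \<in> K" "j \<in> K" "i < j"
    moreover have "\<tau> (Suc i) \<le> \<tau> j"
      using \<open>i < j\<close> n by (simp add: \<tau>_def divide_right_mono)
    ultimately show "r i \<noteq> r j"
      using r[of i] r[of j] by force
  qed
  ultimately have "card K \<le> card (F_zeros n)"
    using card_inj_on_le finite_F_zeros[OF assms(2)] by blast
  moreover have "real n * (pi - \<beta>) / pi - 1 - real n * \<beta> / pi - 1 \<le> real (card K)"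
    unfolding K_def using \<beta> n by (intro card_nat_between_ge) simp
  moreover have "real n * (pi - \<beta>) / pi - 1 - real n * \<beta> / pi - 1 = real n * (pi - 2 * \<beta>) / pi - 2"
    by (simp add: field_simps)
  ultimately show ?thesis
    by (simp add: \<beta>_def)
qed

lemma F'_nonzero_at_inner_F_zero:
  fixes \<alpha> \<epsilon> :: real
  assumes "4 * \<alpha>^3 - 2 * \<alpha> = 1" "0 \<le> \<epsilon>" "16 < (real n)\<^sup>2 * cubic_margin \<alpha> \<epsilon>"
    and "F n t = 0" "arccos \<alpha> + \<epsilon> \<le> t" "t \<le> pi - arccos \<alpha> - \<epsilon>"
  shows "F' n t \<noteq> 0"
proof
  assume "F' n t = 0"
  have "(real n)\<^sup>2 * cubic_margin \<alpha> \<epsilon> \<le> (real n)\<^sup>2 * (sin (real n * t))\<^sup>2"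
    using sin_sq_ge_margin_at_F_zero[OF assms(1,2,4-6)] by (simp add: mult_left_mono)
  then show False
    using sin_bound_at_F'_zero[OF \<open>F' n t = 0\<close>] assms(3) by (simp add: power_mult_distrib)
qed

lemma card_inner_F_zeros_le:
  fixes \<alpha> \<epsilon> :: real
  assumes "4 * \<alpha>^3 - 2 * \<alpha> = 1" "0 \<le> \<epsilon>" "16 < (real n)\<^sup>2 * cubic_margin \<alpha> \<epsilon>"
  shows "real (card {t \<in> F_zeros n. arccos \<alpha> + \<epsilon> \<le> t \<and> t \<le> pi - arccos \<alpha> - \<epsilon>})
    \<le> real n * (pi - 2 * arccos \<alpha>) / pi + 2"
proof -
  define \<beta> where "\<beta> = arccos \<alpha>"
  define M where "M = {t \<in> F_zeros n. \<beta> + \<epsilon> \<le> t \<and> t \<le> pi - \<beta> - \<epsilon>}"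
  define half_period where "half_period t = \<lfloor>real n * t / pi\<rfloor>" for t
  have "inj_on half_period M"
  proof (rule linorder_inj_onI')
    fix t1 t2 assume "t1 \<in> M" "t2 \<in> M" "t1 < t2"
    show "half_period t1 \<noteq> half_period t2"
    proof
      assume "half_period t1 = half_period t2"
      then show False
        using at_most_one_F_zero_in_half_period[OF assms(3) \<open>t1 < t2\<close>, of "half_period t1"]
          floor_div_pi_bounds[of "real n * t1"] floor_div_pi_bounds[of "real n * t2"]
          sin_sq_ge_margin_at_F_zero[OF assms(1,2)] \<open>t1 \<in> M\<close> \<open>t2 \<in> M\<close>
        by (auto simp: M_def F_zeros_def half_period_def \<beta>_def)
    qed
  qed
  moreover have "half_period ` M \<subseteq> {\<lfloor>real n * \<beta> / pi\<rfloor>..\<lfloor>real n * (pi - \<beta>) / pi\<rfloor>}"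
    using F_zeros_band[OF assms(1)]
    by (auto simp: M_def half_period_def \<beta>_def intro!: floor_mono divide_right_mono mult_left_mono)
  ultimately have "card M \<le> card {\<lfloor>real n * \<beta> / pi\<rfloor>..\<lfloor>real n * (pi - \<beta>) / pi\<rfloor>}"
    by (metis card_image card_mono finite_atLeastAtMost_int)
  moreover have "\<beta> \<le> pi - \<beta>"
    using arccos_cubic_root[OF assms(1)] by (simp add: \<beta>_def)
  then have "real (card {\<lfloor>real n * \<beta> / pi\<rfloor>..\<lfloor>real n * (pi - \<beta>) / pi\<rfloor>})
      \<le> real n * (pi - 2 * \<beta>) / pi + 2"
    using card_half_period_indices_le[of \<beta> "pi - \<beta>" n] by simp
  ultimately show ?thesis
    by (simp add: M_def \<beta>_def)
qed

lemma card_outer_F_zeros_le: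
  fixes \<alpha> \<epsilon> :: real
  assumes "4 * \<alpha>^3 - 2 * \<alpha> = 1" "0 \<le> \<epsilon>" "n \<ge> 6"
  shows "real (card {t \<in> F_zeros n. t < arccos \<alpha> + \<epsilon> \<or> pi - arccos \<alpha> - \<epsilon> < t})
    \<le> 6 * (real n * \<epsilon> / pi + 2)"
proof -
  define \<beta> where "\<beta> = arccos \<alpha>"
  define E where "E = {t \<in> F_zeros n. t < \<beta> + \<epsilon> \<or> pi - \<beta> - \<epsilon> < t}"
  define half_period where "half_period t = \<lfloor>real n * t / pi\<rfloor>" for t
  define I where "I a b = {\<lfloor>real n * a / pi\<rfloor>..\<lfloor>real n * b / pi\<rfloor>}" for a b
  have "finite E"
    using finite_F_zeros[of n] assms(3) by (simp add: E_def)
  have "card {t \<in> E. half_period t = k} \<le> 3" for k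
  proof (rule card_le_3_if_no_increasing_4)
    show "finite {t \<in> E. half_period t = k}"
      using \<open>finite E\<close> by simp
    fix t1 t2 t3 t4 assume t: "t1 \<in> {t \<in> E. half_period t = k}" "t2 \<in> {t \<in> E. half_period t = k}"
      "t3 \<in> {t \<in> E. half_period t = k}" "t4 \<in> {t \<in> E. half_period t = k}" "t1 < t2" "t2 < t3" "t3 < t4"
    show False
      using at_most_three_F_zeros_in_half_period[OF assms(3) t(5-7), of k]
        floor_div_pi_bounds[of "real n * t1"] floor_div_pi_bounds[of "real n * t4"] t(1-4)
      by (auto simp: E_def F_zeros_def half_period_def)
  qed
  then have "card E \<le> 3 * card (half_period ` E)"
    by (rule card_le_mult_card_image[OF \<open>finite E\<close>])
  moreover have "half_period ` E \<subseteq> I \<beta> (\<beta> + \<epsilon>) \<union> I (pi - \<beta> - \<epsilon>) (pi - \<beta>)"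
    using F_zeros_band[OF assms(1)]
    by (fastforce simp: E_def half_period_def I_def \<beta>_def intro!: floor_mono divide_right_mono mult_left_mono)
  then have "card (half_period ` E) \<le> card (I \<beta> (\<beta> + \<epsilon>)) + card (I (pi - \<beta> - \<epsilon>) (pi - \<beta>))"
    by (metis card_Un_le card_mono finite_UnI finite_atLeastAtMost_int I_def order_trans)
  moreover have "real (card (I \<beta> (\<beta> + \<epsilon>))) \<le> real n * \<epsilon> / pi + 2"
    "real (card (I (pi - \<beta> - \<epsilon>) (pi - \<beta>))) \<le> real n * \<epsilon> / pi + 2"
    using card_half_period_indices_le[of \<beta> "\<beta> + \<epsilon>" n]
      card_half_period_indices_le[of "pi - \<beta> - \<epsilon>" "pi - \<beta>" n] assms(2) by (simp_all add: I_def)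
  ultimately show ?thesis
    by (simp add: E_def \<beta>_def)
qed

section \<open>Asymptotics\<close>

lemma U_count_P2n_le:
  fixes \<alpha> \<epsilon> :: real
  assumes "4 * \<alpha>^3 - 2 * \<alpha> = 1" "0 \<le> \<epsilon>" "n \<ge> 6" "16 < (real n)\<^sup>2 * cubic_margin \<alpha> \<epsilon>"
  shows "real (U_count (P2n n)) / real n \<le> 2 * (pi - 2 * arccos \<alpha>) / pi + 24 * \<epsilon> / pi + 52 / real n"
proof -
  define w where "w t = (if F' n t = 0 then 4 else 2 :: nat)" for t
  define M where "M = {t \<in> F_zeros n. arccos \<alpha> + \<epsilon> \<le> t \<and> t \<le> pi - arccos \<alpha> - \<epsilon>}"
  define E where "E = {t \<in> F_zeros n. t < arccos \<alpha> + \<epsilon> \<or> pi - arccos \<alpha> - \<epsilon> < t}"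
  have "F_zeros n = M \<union> E" "M \<inter> E = {}" "finite M" "finite E"
    using finite_F_zeros[of n] assms(3) by (auto simp: M_def E_def)
  then have "U_count (P2n n) \<le> sum w M + sum w E"
    using U_count_P2n_bounds(2)[OF assms(3)] by (simp add: w_def sum.union_disjoint)
  also have "sum w M = 2 * card M"
    using F'_nonzero_at_inner_F_zero[OF assms(1,2,4)] by (simp add: w_def M_def F_zeros_def)
  also have "sum w E \<le> 4 * card E"
    using sum_bounded_above[of E w 4] by (simp add: w_def mult.commute)
  finally have "real (U_count (P2n n)) \<le> 2 * real (card M) + 4 * real (card E)"
    by linarith
  also have "\<dots> \<le> 2 * (real n * (pi - 2 * arccos \<alpha>) / pi + 2) + 4 * (6 * (real n * \<epsilon> / pi + 2))"
    using card_inner_F_zeros_le[OF assms(1,2,4)] card_outer_F_zeros_le[OF assms(1-3)]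
    unfolding M_def E_def by (intro add_mono mult_left_mono) auto
  finally have "real (U_count (P2n n)) / real n
      \<le> (2 * (real n * (pi - 2 * arccos \<alpha>) / pi + 2) + 4 * (6 * (real n * \<epsilon> / pi + 2))) / real n"
    by (rule divide_right_mono) simp
  also have "\<dots> = 2 * (pi - 2 * arccos \<alpha>) / pi + 24 * \<epsilon> / pi + 52 / real n"
    using assms(3) by (simp add: field_simps)
  finally show ?thesis .
qed

lemma U_count_P2n_ge:
  fixes \<alpha> :: real
  assumes "4 * \<alpha>^3 - 2 * \<alpha> = 1" "n \<ge> 6"
  shows "2 * (pi - 2 * arccos \<alpha>) / pi - 4 / real n \<le> real (U_count (P2n n)) / real n"
proof -
  have "2 * real (card (F_zeros n)) \<le> real (U_count (P2n n))"
    using U_count_P2n_bounds(1)[OF assms(2)] by linarith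
  then have "(2 * (real n * (pi - 2 * arccos \<alpha>) / pi - 2)) / real n \<le> real (U_count (P2n n)) / real n"
    using card_F_zeros_ge[OF assms(1), of n] assms(2) by (intro divide_right_mono) simp_all
  moreover have "(2 * (real n * (pi - 2 * arccos \<alpha>) / pi - 2)) / real n
      = 2 * (pi - 2 * arccos \<alpha>) / pi - 4 / real n"
    using assms(2) by (simp add: field_simps)
  ultimately show ?thesis
    by simp
qed

lemma eventually_real_gt: "\<forall>\<^sub>F n in sequentially. c < real n"
proof -
  obtain N :: nat where "c < real N"
    using reals_Archimedean2 by blast
  then show ?thesis
    by (auto simp: eventually_sequentially intro!: exI[of _ N] elim!: less_le_trans)
qed

lemma U_count_P2n_asymptotics:
  fixes \<alpha> :: real
  assumes "4 * \<alpha>^3 - 2 * \<alpha> = 1"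
  shows "(\<lambda>n. real (U_count (P2n n)) / real n) \<longlonglongrightarrow> 2 * (pi - 2 * arccos \<alpha>) / pi"
proof (rule order_tendstoI)
  define L where "L = 2 * (pi - 2 * arccos \<alpha>) / pi"
  fix a assume "a < 2 * (pi - 2 * arccos \<alpha>) / pi"
  then have "0 < L - a" by (simp add: L_def)
  show "\<forall>\<^sub>F n in sequentially. a < real (U_count (P2n n)) / real n"
    using eventually_real_gt[of 6] eventually_real_gt[of "4 / (L - a)"]
  proof eventually_elim
    case (elim n)
    then have "4 / real n < L - a"
      using \<open>0 < L - a\<close> by (simp add: field_simps)
    then show ?case
      using U_count_P2n_ge[OF assms, of n] elim(1) by (simp add: L_def)
  qed
next
  define L where "L = 2 * (pi - 2 * arccos \<alpha>) / pi"
  fix a assume "2 * (pi - 2 * arccos \<alpha>) / pi < a"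
  then have "0 < a - L" by (simp add: L_def)
  define \<epsilon> where "\<epsilon> = min (pi / 2) ((a - L) * pi / 48)"
  have \<epsilon>: "0 < \<epsilon>" "\<epsilon> \<le> pi / 2" "24 * \<epsilon> / pi \<le> (a - L) / 2"
    using \<open>0 < a - L\<close> by (auto simp: \<epsilon>_def min_def field_simps)
  have m: "0 < cubic_margin \<alpha> \<epsilon>"
    using cubic_margin_pos(2)[OF assms] \<epsilon> by simp
  show "\<forall>\<^sub>F n in sequentially. real (U_count (P2n n)) / real n < a"
    using eventually_real_gt[of 6] eventually_real_gt[of "16 / cubic_margin \<alpha> \<epsilon>"]
      eventually_real_gt[of "104 / (a - L)"]
  proof eventually_elim
    case (elim n)
    then have "16 < real n * cubic_margin \<alpha> \<epsilon>" "real n * cubic_margin \<alpha> \<epsilon> \<le> (real n)\<^sup>2 * cubic_margin \<alpha> \<epsilon>"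
      using m by (simp_all add: field_simps power2_eq_square)
    moreover have "52 / real n < (a - L) / 2"
      using elim(1,3) \<open>0 < a - L\<close> by (simp add: field_simps)
    ultimately show ?case
      using U_count_P2n_le[OF assms less_imp_le[OF \<epsilon>(1)], of n] elim(1) \<epsilon>(3) by (simp add: L_def)
  qed
qed

theorem mainTheorem6:
  fixes \<alpha> :: real
  assumes "4 * \<alpha>^3 - 2 * \<alpha> = 1"
  shows "(\<lambda>n. C_ratio (P2n n)) \<longlonglongrightarrow> (2 / pi) * arccos \<alpha>"
proof -
  define u where "u n = real (U_count (P2n n)) / real n" for n
  have "(\<lambda>n. 1 - u n / 2) \<longlonglongrightarrow> 1 - 2 * (pi - 2 * arccos \<alpha>) / pi / 2"
    using U_count_P2n_asymptotics[OF assms] unfolding u_def[symmetric] by (intro tendsto_intros) simp_all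
  moreover have "1 - 2 * (pi - 2 * arccos \<alpha>) / pi / 2 = (2 / pi) * arccos \<alpha>"
    by (simp add: field_simps)
  moreover have "\<forall>\<^sub>F n in sequentially. 1 - u n / 2 = C_ratio (P2n n)"
    using eventually_ge_at_top[of 4]
  proof eventually_elim
    case (elim n)
    then show ?case
      using C_ratio_eq[of "P2n n"] degree_P2n[OF elim] by (simp add: u_def)
  qed
  ultimately show ?thesis
    using Lim_transform_eventually by metis
qed

end
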